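(* Let $(E,d)$ be a metric space with a Borel probability measure $\mu$, let $k\geq1$ and $\alpha_k:[0,\infty)\to[0,\infty)$. The following are equivalent: (1) For all Borel sets $A_1,\ldots,A_k\subset E$ with $(\mu(A_1),\ldots,\mu(A_k))\in\Delta_k$, the set $A=A_1\cup\cdots\cup A_k$ satisfies $\mu(A_r)\geq1-(1-\mu(A))\alpha_k(r)$ for all $0<r\leq\frac12\min_{i\neq j}d(A_i,A_j)$. (2) For all $1$-Lipschitz functions $f_1,\ldots,f_k:E\to\mathbb{R}$ such that the sets $A_i=\{f_i\leq0\}$ satisfy $(\mu(A_1),\ldots,\mu(A_k))\in\Delta_k$, the function $f^*=\min(f_1,\ldots,f_k)$ satisfies $\mu(f^*<r)\geq1-\mu(f^*>0)\,\alpha_k(r)$ for all $0<r\leq\frac12\min_{i\neq j}d(A_i,A_j)$.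
   Context: For $A,B\subset E$, $d(A,B)=\inf\{d(x,y):x\in A,y\in B\}$. For $A\subset E$ and $r>0$, $A_r=\{x\in E:\exists y\in A,\ d(x,y)<r\}$. $\Delta_k$ is the set of $(a_1,\ldots,a_k)\in[0,1]^k$ with $\sum_ja_j\leq1$ and $a_i+\sum_ja_j\geq1$ for every $i$. *)

theory Defs
  imports "HOL-Probability.Probability"
begin

text \<open>Distance between sets, d(A,B) = inf of d(x,y); valued in ereal so that
  the infimum over an empty set is +infinity.\<close>
definition set_dist :: "'a::metric_space set \<Rightarrow> 'a set \<Rightarrow> ereal" where
  "set_dist A B = (INF x\<in>A. INF y\<in>B. ereal (dist x y))"

definition enlarge :: "'a::metric_space set \<Rightarrow> real \<Rightarrow> 'a set" where
  "enlarge A r = {x. \<exists>y\<in>A. dist x y < r}"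

definition Delta :: "nat \<Rightarrow> (nat \<Rightarrow> real) \<Rightarrow> bool" where
  "Delta k a \<longleftrightarrow> (\<forall>i<k. 0 \<le> a i \<and> a i \<le> 1) \<and> (\<Sum>j<k. a j) \<le> 1
      \<and> (\<forall>i<k. a i + (\<Sum>j<k. a j) \<ge> 1)"

text \<open>min over i \<noteq> j of d(A_i,A_j) (= +infinity when k = 1).\<close>
definition min_sep :: "nat \<Rightarrow> (nat \<Rightarrow> 'a::metric_space set) \<Rightarrow> ereal" where
  "min_sep k A = (INF i\<in>{..<k}. INF j\<in>{..<k}-{i}. set_dist (A i) (A j))"

end

theory Submission
  imports Defs
begin

text \<open>For (1) \<Longrightarrow> (2) take \<open>A\<^sub>i = {f\<^sub>i \<le> 0}\<close>: these sets are closed, the complement of their union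
  is \<open>{f\<^sup>* > 0}\<close>, and by the Lipschitz property \<open>A\<^sub>r \<subseteq> {f\<^sup>* < r}\<close>.
  For (2) \<Longrightarrow> (1) take \<open>f\<^sub>i = d(\<cdot>, A\<^sub>i)\<close>: then \<open>{f\<^sub>i \<le> 0}\<close> is the closure of \<open>A\<^sub>i\<close> and \<open>{f\<^sup>* < r} = A\<^sub>r\<close>.
  Passing to closures keeps the separation, hence disjointness, so the measures of the
  closures still lie in \<open>\<Delta>\<^sub>k\<close>; and it only enlarges \<open>\<mu>(A)\<close>, which weakens the bound.\<close>

lemma ereal_le_set_dist_iff:
  "ereal c \<le> set_dist A B \<longleftrightarrow> (\<forall>x\<in>A. \<forall>y\<in>B. c \<le> dist x y)"
  by (simp add: set_dist_def le_INF_iff)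

lemma set_dist_closure_ge:
  fixes A B :: "'a::metric_space set"
  assumes "ereal c \<le> set_dist A B"
  shows "ereal c \<le> set_dist (closure A) (closure B)"
proof -
  let ?S = "{p :: 'a \<times> 'a. c \<le> dist (fst p) (snd p)}"
  have "closed ?S"
    by (intro closed_Collect_le continuous_intros)
  moreover have "A \<times> B \<subseteq> ?S"
    using assms by (auto simp: ereal_le_set_dist_iff)
  ultimately have "closure A \<times> closure B \<subseteq> ?S"
    by (metis closure_Times closure_minimal)
  then show ?thesis
    by (auto simp: ereal_le_set_dist_iff)
qed

lemma min_sep_closure_ge:
  "ereal c \<le> min_sep k A \<Longrightarrow> ereal c \<le> min_sep k (\<lambda>i. closure (A i))"
  by (auto simp: min_sep_def le_INF_iff intro: set_dist_closure_ge)

lemma disjoint_family_on_if_min_sep_pos: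
  assumes "0 < c" and "ereal c \<le> min_sep k A"
  shows "disjoint_family_on A {..<k}"
unfolding disjoint_family_on_def
proof (intro ballI impI)
  fix i j assume "i \<in> {..<k}" "j \<in> {..<k}" "i \<noteq> j"
  then have "ereal c \<le> set_dist (A i) (A j)"
    using assms(2) by (auto simp: min_sep_def le_INF_iff)
  then show "A i \<inter> A j = {}"
    using assms(1) by (fastforce simp: ereal_le_set_dist_iff)
qed

lemma Delta_increase:
  assumes "Delta k a" and "\<And>i. i < k \<Longrightarrow> a i \<le> b i \<and> b i \<le> 1" and "(\<Sum>j<k. b j) \<le> 1"
  shows "Delta k b"
proof -
  have "(\<Sum>j<k. a j) \<le> (\<Sum>j<k. b j)"
    using assms(2) by (intro sum_mono) auto
  with assms show ?thesis
    unfolding Delta_def by (force intro: order_trans add_mono)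
qed

lemma Delta_measure_closure:
  assumes "prob_space M" and "sets M = sets borel"
    and "\<forall>i<k. A i \<in> sets borel" and "Delta k (\<lambda>i. measure M (A i))"
    and "0 < c" and "ereal c \<le> min_sep k A"
  shows "Delta k (\<lambda>i. measure M (closure (A i)))"
proof (rule Delta_increase[OF assms(4)])
  interpret prob_space M by fact
  have closure_meas: "closure (A i) \<in> sets M" for i
    using assms(2) by simp
  have "disjoint_family_on (\<lambda>i. closure (A i)) {..<k}"
    using assms(5,6) by (intro disjoint_family_on_if_min_sep_pos min_sep_closure_ge)
  then have "(\<Sum>j<k. measure M (closure (A j))) = measure M (\<Union>j<k. closure (A j))"
    using closure_meas by (intro finite_measure_finite_Union[symmetric]) auto
  also have "\<dots> \<le> 1"
    by (rule prob_le_1)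
  finally show "(\<Sum>j<k. measure M (closure (A j))) \<le> 1" .
  fix i assume "i < k"
  then have "measure M (A i) \<le> measure M (closure (A i))"
    using assms(2,3) closure_meas closure_subset by (intro finite_measure_mono) auto
  then show "measure M (A i) \<le> measure M (closure (A i)) \<and> measure M (closure (A i)) \<le> 1"
    by (simp add: prob_le_1)
qed

lemma enlarge_UN: "enlarge (\<Union>i\<in>I. A i) r = (\<Union>i\<in>I. enlarge (A i) r)"
  by (auto simp: enlarge_def)

lemma enlarge_eq_infdist_less:
  assumes "A \<noteq> {}"
  shows "enlarge A r = {x. infdist x A < r}"
proof -
  have "bdd_below ((\<lambda>a. dist x a) ` A)" for x :: 'a
    by (rule bdd_belowI[of _ 0]) auto
  then show ?thesis
    using assms by (auto simp: enlarge_def infdist_notempty cINF_less_iff)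
qed

lemma enlarge_sublevel_subset:
  assumes "1-lipschitz_on UNIV f"
  shows "enlarge {x. f x \<le> t} r \<subseteq> {x. f x < t + r}"
proof
  fix x assume "x \<in> enlarge {x. f x \<le> t} r"
  then obtain y where "f y \<le> t" and "dist x y < r"
    by (auto simp: enlarge_def)
  moreover have "dist (f x) (f y) \<le> 1 * dist x y"
    using assms by (intro lipschitz_onD) auto
  ultimately show "x \<in> {x. f x < t + r}"
    by (simp add: dist_real_def abs_le_iff)
qed

lemma Min_image_less_set_eq:
  "finite K \<Longrightarrow> K \<noteq> {} \<Longrightarrow> {x. Min ((\<lambda>i. f i x) ` K) < r} = (\<Union>i\<in>K. {x. f i x < r})"
  by (auto simp: Min_less_iff)

lemma Min_image_greater_set_eq:
  "finite K \<Longrightarrow> K \<noteq> {} \<Longrightarrow> {x. Min ((\<lambda>i. f i x) ` K) > t} = - (\<Union>i\<in>K. {x. f i x \<le> t})"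
  by (auto simp: not_le)

lemma ereal_le_half_iff: "ereal r \<le> x / 2 \<longleftrightarrow> ereal (2 * r) \<le> x"
  using ereal_le_divide_pos[of 2 "ereal r" x] by simp

lemma lipschitz_bound_if_enlargement_bound:
  fixes M :: "'a::metric_space measure" and f :: "nat \<Rightarrow> 'a \<Rightarrow> real"
  assumes "prob_space M" and "sets M = sets borel" and "k \<ge> 1"
    and enlargement_bound: "\<And>A :: nat \<Rightarrow> 'a set.
      \<forall>i<k. A i \<in> sets borel \<Longrightarrow> Delta k (\<lambda>i. measure M (A i)) \<Longrightarrow> ereal r \<le> min_sep k A / 2 \<Longrightarrow>
      measure M (enlarge (\<Union>i<k. A i) r) \<ge> 1 - (1 - measure M (\<Union>i<k. A i)) * \<alpha> r"
    and lip: "\<forall>i<k. 1-lipschitz_on UNIV (f i)"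
    and "Delta k (\<lambda>i. measure M {x. f i x \<le> 0})"
    and "ereal r \<le> min_sep k (\<lambda>i. {x. f i x \<le> 0}) / 2"
  shows "measure M {x. Min ((\<lambda>i. f i x) ` {..<k}) < r}
           \<ge> 1 - measure M {x. Min ((\<lambda>i. f i x) ` {..<k}) > 0} * \<alpha> r"
proof -
  interpret prob_space M by fact
  let ?U = "\<Union>i<k. {x. f i x \<le> 0}"
  have K: "finite {..<k}" "{..<k} \<noteq> {}"
    using assms(3) by (auto simp: lessThan_empty_iff)
  have cont: "continuous_on UNIV (f i)" if "i < k" for i
    using lip that lipschitz_on_continuous_on by blast
  have closed_sublevel: "closed {x. f i x \<le> 0}" if "i < k" for i
    using cont[OF that] by (intro closed_Collect_le continuous_intros)
  then have "?U \<in> sets M"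
    using assms(2) by auto
  moreover have "{x. Min ((\<lambda>i. f i x) ` {..<k}) > 0} = space M - ?U"
    using sets_eq_imp_space_eq[OF assms(2)] Min_image_greater_set_eq[OF K, where t = 0 and f = f] by auto
  ultimately have complement: "measure M {x. Min ((\<lambda>i. f i x) ` {..<k}) > 0} = 1 - measure M ?U"
    by (simp add: prob_compl)
  have "measure M (enlarge ?U r) \<le> measure M {x. Min ((\<lambda>i. f i x) ` {..<k}) < r}"
  proof (rule finite_measure_mono)
    show "enlarge ?U r \<subseteq> {x. Min ((\<lambda>i. f i x) ` {..<k}) < r}"
      unfolding enlarge_UN Min_image_less_set_eq[OF K]
      using enlarge_sublevel_subset[of "f i" 0 r for i] lip by (intro UN_mono) auto
    have "open {x. Min ((\<lambda>i. f i x) ` {..<k}) < r}"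
      unfolding Min_image_less_set_eq[OF K]
      by (intro open_UN ballI open_Collect_less) (auto intro: cont continuous_intros)
    then show "{x. Min ((\<lambda>i. f i x) ` {..<k}) < r} \<in> sets M"
      using assms(2) by simp
  qed
  moreover have "measure M (enlarge ?U r) \<ge> 1 - (1 - measure M ?U) * \<alpha> r"
    using closed_sublevel assms(6,7) by (intro enlargement_bound) auto
  ultimately show ?thesis
    unfolding complement by linarith
qed

lemma enlargement_bound_if_lipschitz_bound:
  fixes M :: "'a::metric_space measure" and A :: "nat \<Rightarrow> 'a set"
  assumes "prob_space M" and "sets M = sets borel" and "k \<ge> 1" and "0 \<le> \<alpha> r"
    and lipschitz_bound: "\<And>f :: nat \<Rightarrow> 'a \<Rightarrow> real.
      \<forall>i<k. 1-lipschitz_on UNIV (f i) \<Longrightarrow> Delta k (\<lambda>i. measure M {x. f i x \<le> 0}) \<Longrightarrow>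
      ereal r \<le> min_sep k (\<lambda>i. {x. f i x \<le> 0}) / 2 \<Longrightarrow>
      measure M {x. Min ((\<lambda>i. f i x) ` {..<k}) < r}
        \<ge> 1 - measure M {x. Min ((\<lambda>i. f i x) ` {..<k}) > 0} * \<alpha> r"
    and borel: "\<forall>i<k. A i \<in> sets borel"
    and Delta: "Delta k (\<lambda>i. measure M (A i))"
    and "0 < r" and sep: "ereal r \<le> min_sep k A / 2"
  shows "measure M (enlarge (\<Union>i<k. A i) r) \<ge> 1 - (1 - measure M (\<Union>i<k. A i)) * \<alpha> r"
proof -
  interpret prob_space M by fact
  have K: "finite {..<k}" "{..<k} \<noteq> {}"
    using assms(3) by (auto simp: lessThan_empty_iff)
  txt \<open>Since \<open>infdist x {} = 0\<close>, an empty \<open>A\<^sub>i\<close> gets the constant \<open>r\<close> instead.\<close>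
  define f where "f i x = (if A i = {} then r else infdist x (A i))" for i x
  let ?C = "\<Union>i<k. closure (A i)"
  have lip: "\<forall>i<k. 1-lipschitz_on UNIV (f i)"
    by (auto simp: f_def dist_real_def intro!: lipschitz_onI infdist_triangle_abs)
  have sublevel: "{x. f i x \<le> 0} = closure (A i)" for i
  proof (cases "A i = {}")
    case False
    then show ?thesis
      using in_closure_iff_infdist_zero[OF False] infdist_nonneg[of _ "A i"]
      by (auto simp: f_def intro: order.antisym)
  qed (use \<open>0 < r\<close> in \<open>auto simp: f_def\<close>)
  have "{x. f i x < r} = enlarge (A i) r" for i
    by (cases "A i = {}") (auto simp: f_def enlarge_eq_infdist_less, simp add: enlarge_def)
  then have less: "{x. Min ((\<lambda>i. f i x) ` {..<k}) < r} = enlarge (\<Union>i<k. A i) r"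
    by (simp add: Min_image_less_set_eq[OF K] enlarge_UN)
  have "{x. Min ((\<lambda>i. f i x) ` {..<k}) > 0} = space M - ?C"
    using sets_eq_imp_space_eq[OF assms(2)] Min_image_greater_set_eq[OF K, where t = 0 and f = f]
    by (auto simp: sublevel)
  then have greater: "measure M {x. Min ((\<lambda>i. f i x) ` {..<k}) > 0} = 1 - measure M ?C"
    using assms(2) by (simp add: prob_compl)
  have double_sep: "ereal (2 * r) \<le> min_sep k A"
    using sep ereal_le_half_iff by blast
  then have "ereal r \<le> min_sep k (\<lambda>i. {x. f i x \<le> 0}) / 2"
    unfolding sublevel using min_sep_closure_ge ereal_le_half_iff by blast
  moreover have "Delta k (\<lambda>i. measure M {x. f i x \<le> 0})"
    unfolding sublevel using \<open>0 < r\<close>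
    by (intro Delta_measure_closure[OF assms(1,2) borel Delta _ double_sep]) simp
  ultimately have "measure M (enlarge (\<Union>i<k. A i) r) \<ge> 1 - (1 - measure M ?C) * \<alpha> r"
    using lipschitz_bound[OF lip] unfolding less greater by blast
  moreover have "measure M (\<Union>i<k. A i) \<le> measure M ?C"
    using assms(2) borel closure_subset by (intro finite_measure_mono UN_mono) auto
  then have "(1 - measure M ?C) * \<alpha> r \<le> (1 - measure M (\<Union>i<k. A i)) * \<alpha> r"
    using assms(4) by (intro mult_right_mono) auto
  ultimately show ?thesis
    by linarith
qed

theorem proposition4p1:
  fixes M :: "'a::metric_space measure" and k :: nat and \<alpha> :: "real \<Rightarrow> real"
  assumes "prob_space M" and "sets M = sets borel" and "k \<ge> 1"
    and "\<And>r. r \<ge> 0 \<Longrightarrow> \<alpha> r \<ge> 0"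
  shows "(\<forall>A :: nat \<Rightarrow> 'a set.
            (\<forall>i<k. A i \<in> sets borel) \<and> Delta k (\<lambda>i. measure M (A i)) \<longrightarrow>
            (\<forall>r. 0 < r \<and> ereal r \<le> min_sep k A / 2 \<longrightarrow>
               measure M (enlarge (\<Union>i<k. A i) r)
                 \<ge> 1 - (1 - measure M (\<Union>i<k. A i)) * \<alpha> r))
     \<longleftrightarrow>
         (\<forall>f :: nat \<Rightarrow> 'a \<Rightarrow> real.
            (\<forall>i<k. 1-lipschitz_on UNIV (f i)) \<and>
            Delta k (\<lambda>i. measure M {x. f i x \<le> 0}) \<longrightarrow>
            (\<forall>r. 0 < r \<and> ereal r \<le> min_sep k (\<lambda>i. {x. f i x \<le> 0}) / 2 \<longrightarrow>
               measure M {x. Min ((\<lambda>i. f i x) ` {..<k}) < r}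
                 \<ge> 1 - measure M {x. Min ((\<lambda>i. f i x) ` {..<k}) > 0} * \<alpha> r))"
  by (intro iffI allI impI; elim conjE;
      rule lipschitz_bound_if_enlargement_bound[OF assms(1-3)]
        enlargement_bound_if_lipschitz_bound[OF assms(1-3)])
    (auto simp: assms(4))

end
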